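(* In the setting below, the iterates of Algorithm PDC satisfy, for all $k\ge0$, $$\psi(y^{k+1},v^{k+1};\rho^k)\le\psi(y^k,v^k;\rho^k)-\rho^k\beta^k\|(y^{k+1}-y^k,\ v^{k+1}-v^k)\|_2^2,$$ where $\psi(y,v;\rho)=F(y,v)+\rho\,\varphi(y,v)$.
   Context: Setting. $\mathcal A$ is a finite set of links; $\mathcal V=\{\Delta h: h\ge0,\ \Lambda h=d\}\subset\mathbb R^{|\mathcal A|}$, where $\Delta$ is a 0/1 link–route incidence matrix, $\Lambda$ a 0/1 OD–route incidence matrix in which every route belongs to exactly one OD pair and every OD pair has at least one route, and $d>0$ (so $\mathcal V$ is a nonempty compact convex polytope in $\mathbb R^{|\mathcal A|}_{\ge0}$). Let $u_a\ge0$, $\mathcal Y=\{y: 0\le y_a\le u_a\ \forall a\}$, $1\le\tau\le|\mathcal A|$, $\Upsilon_\tau=\{y\in\mathcal Y: |\{a: y_a>0\}|\le\tau\}$. Standing assumptions: each $t_a(y_a,v_a)$ is continuously differentiable and strictly increasing in $v_a$ for $y_a\ge0$; each $G_a$ is nonnegative, continuously differentiable, strictly increasing, convex; $\int_0^{v_a}t_a(y_a,w)dw$ and $t_a(y_a,v_a)v_a$ are convex in $(y_a,v_a)$. With $\eta>0$: $F(y,v)=\sum_a t_a(y_a,v_a)v_a+\eta\sum_aG_a(y_a)$, $f(y,v)=\sum_a\int_0^{v_a}t_a(y_a,w)dw$, $g(y)=\min_{v\in\mathcal V}f(y,v)$, $\varphi(y,v)=f(y,v)-g(y)$. $\mathcal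 V^*(y)$ is the set of $v\in\mathcal V$ with $\langle t(y,v),v'-v\rangle\ge0$ for all $v'\in\mathcal V$; it is a singleton equal to $\arg\min_{v\in\mathcal V}f(y,v)$. Known fact: $g$ is convex and continuously differentiable on $\mathcal Y$. Define $\Phi(y,v;\bar y,\bar v)=f(y,v)-g(\bar y)-\nabla g(\bar y)^{\mathsf T}(y-\bar y)$ and, for given $\rho^k,\beta^k>0$ and $(y^k,v^k)$, $\Psi^k(y,v)=F(y,v)+\rho^k\Phi(y,v;y^k,v^k)+\rho^k\beta^k\|(y-y^k,v-v^k)\|_2^2$. Algorithm AMA with inputs $(\rho^k,\beta^k,y^k,v^k;y^{k,0})$: for $j=0,1,\dots$: $v^{k,j+1}$ = unique minimizer of $\Psi^k(y^{k,j},\cdot)$ over $\mathcal V$; $y^{k,j+1}$ = a minimizer of $\Psi^k(\cdot,v^{k,j+1})$ over $\Upsilon_\tau$; stop if $(y^{k,j+1},v^{k,j+1})$ is partially optimal (i.e. $\Psi^k(y^{k,j+1},v^{k,j+1})\le\Psi^k(y^{k,j+1},v)\ \forall v\in\mathcal V$ and $\le\Psi^k(y,v^{k,j+1})\ \forall y\in\Upsilon_\tau$). $\mathrm{AMA}(\cdot)$ denotes the returned point if it stops, otherwise any accumulation point of its iterates. Algorithm PDC with parameters $\epsilon_1,\epsilon_2,\epsilon_3>0$, $0<\theta_l<\theta_u$, $\rho^0>0$, $\sigma>1$, $y^0\in\Upsilon_\tau$: set $v^0\in\mathcal V^*(y^0)$ and choose $\beta^0\in[\theta_l/\rho^0,\theta_u/\rho^0]$;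 for $k=0,1,\dots$: (i) $(y^{k+1},v^{k+1})=\mathrm{AMA}(\rho^k,\beta^k,y^k,v^k;y^k)$; (ii) if $\|y^{k+1}-y^k\|_2\le\epsilon_1$, $\|v^{k+1}-v^k\|_2\le\epsilon_2$ and $\Phi(y^{k+1},v^{k+1};y^k,v^k)\le\epsilon_3$, stop and return $(y^{k+1},v^{k+1})$; (iii) set $\rho^{k+1}=\sigma\rho^k$ if $\Phi(y^{k+1},v^{k+1};y^k,v^k)>\epsilon_3$, else $\rho^{k+1}=\rho^k$; (iv) choose $\beta^{k+1}\in[\theta_l/\rho^{k+1},\theta_u/\rho^{k+1}]$. *)

theory Defs
  imports "HOL-Analysis.Analysis"
begin

text \<open>Links are the finite type 'a, routes the finite type 'r, OD pairs the finite type 'w.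
  Link vectors live in real^'a. Delta is the link-route incidence matrix, Lambda the
  OD-route incidence matrix.\<close>

definition flowset ::
  "('a::finite \<Rightarrow> 'r::finite \<Rightarrow> real) \<Rightarrow> ('w::finite \<Rightarrow> 'r \<Rightarrow> real) \<Rightarrow> ('w \<Rightarrow> real) \<Rightarrow> (real^'a) set" where
  "flowset Delta Lambda d =
     {v. \<exists>h::'r \<Rightarrow> real. (\<forall>r. 0 \<le> h r) \<and> (\<forall>w. (\<Sum>r\<in>UNIV. Lambda w r * h r) = d w)
          \<and> v = (\<chi> a. \<Sum>r\<in>UNIV. Delta a r * h r)}"

definition boxset :: "real^'a::finite \<Rightarrow> (real^'a) set" where
  "boxset u = {y. \<forall>a. 0 \<le> y$a \<and> y$a \<le> u$a}"

definition sparse_box :: "real^'a::finite \<Rightarrow> nat \<Rightarrow> (real^'a) set" where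
  "sparse_box u \<tau> = {y \<in> boxset u. card {a. 0 < y$a} \<le> \<tau>}"

definition Fobj :: "('a::finite \<Rightarrow> real \<Rightarrow> real \<Rightarrow> real) \<Rightarrow> ('a \<Rightarrow> real \<Rightarrow> real) \<Rightarrow> real
     \<Rightarrow> real^'a \<Rightarrow> real^'a \<Rightarrow> real" where
  "Fobj t G \<eta> y v = (\<Sum>a\<in>UNIV. t a (y$a) (v$a) * v$a) + \<eta> * (\<Sum>a\<in>UNIV. G a (y$a))"

definition fpot :: "('a::finite \<Rightarrow> real \<Rightarrow> real \<Rightarrow> real) \<Rightarrow> real^'a \<Rightarrow> real^'a \<Rightarrow> real" where
  "fpot t y v = (\<Sum>a\<in>UNIV. integral {0..v$a} (t a (y$a)))"

definition gval :: "('a::finite \<Rightarrow> real \<Rightarrow> real \<Rightarrow> real) \<Rightarrow> (real^'a) set \<Rightarrow> real^'a \<Rightarrow> real" where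
  "gval t V y = (INF v\<in>V. fpot t y v)"

definition phi :: "('a::finite \<Rightarrow> real \<Rightarrow> real \<Rightarrow> real) \<Rightarrow> (real^'a) set \<Rightarrow> real^'a \<Rightarrow> real^'a \<Rightarrow> real" where
  "phi t V y v = fpot t y v - gval t V y"

definition Phi :: "('a::finite \<Rightarrow> real \<Rightarrow> real \<Rightarrow> real) \<Rightarrow> (real^'a) set \<Rightarrow> (real^'a \<Rightarrow> real^'a)
     \<Rightarrow> real^'a \<Rightarrow> real^'a \<Rightarrow> real^'a \<Rightarrow> real^'a \<Rightarrow> real" where
  "Phi t V gradg y v yb vb = fpot t y v - gval t V yb - gradg yb \<bullet> (y - yb)"

definition Psik :: "('a::finite \<Rightarrow> real \<Rightarrow> real \<Rightarrow> real) \<Rightarrow> ('a \<Rightarrow> real \<Rightarrow> real) \<Rightarrow> real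
     \<Rightarrow> (real^'a) set \<Rightarrow> (real^'a \<Rightarrow> real^'a) \<Rightarrow> real \<Rightarrow> real \<Rightarrow> real^'a \<Rightarrow> real^'a
     \<Rightarrow> real^'a \<Rightarrow> real^'a \<Rightarrow> real" where
  "Psik t G \<eta> V gradg \<rho> \<beta> yk vk y v =
     Fobj t G \<eta> y v + \<rho> * Phi t V gradg y v yk vk + \<rho> * \<beta> * (norm (y - yk, v - vk))\<^sup>2"

definition psi :: "('a::finite \<Rightarrow> real \<Rightarrow> real \<Rightarrow> real) \<Rightarrow> ('a \<Rightarrow> real \<Rightarrow> real) \<Rightarrow> real
     \<Rightarrow> (real^'a) set \<Rightarrow> real^'a \<Rightarrow> real^'a \<Rightarrow> real \<Rightarrow> real" where
  "psi t G \<eta> V y v \<rho> = Fobj t G \<eta> y v + \<rho> * phi t V y v"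

definition VI_sol :: "('a::finite \<Rightarrow> real \<Rightarrow> real \<Rightarrow> real) \<Rightarrow> (real^'a) set \<Rightarrow> real^'a \<Rightarrow> (real^'a) set" where
  "VI_sol t V y = {v \<in> V. \<forall>v'\<in>V. 0 \<le> (\<Sum>a\<in>UNIV. t a (y$a) (v$a) * (v'$a - v$a))}"

definition partially_optimal :: "('y \<Rightarrow> 'v \<Rightarrow> real) \<Rightarrow> 'y set \<Rightarrow> 'v set \<Rightarrow> 'y \<Rightarrow> 'v \<Rightarrow> bool" where
  "partially_optimal P Y V y v \<longleftrightarrow> (\<forall>v'\<in>V. P y v \<le> P y v') \<and> (\<forall>y'\<in>Y. P y v \<le> P y' v)"

definition ama_steps :: "('y \<Rightarrow> 'v \<Rightarrow> real) \<Rightarrow> 'y set \<Rightarrow> 'v set \<Rightarrow> 'y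
     \<Rightarrow> (nat \<Rightarrow> 'y) \<Rightarrow> (nat \<Rightarrow> 'v) \<Rightarrow> nat \<Rightarrow> bool" where
  "ama_steps P Y V y0 ys vs n \<longleftrightarrow> ys 0 = y0 \<and>
     (\<forall>j<n. vs (Suc j) \<in> V \<and> (\<forall>v\<in>V. P (ys j) (vs (Suc j)) \<le> P (ys j) v)
          \<and> ys (Suc j) \<in> Y \<and> (\<forall>y\<in>Y. P (ys (Suc j)) (vs (Suc j)) \<le> P y (vs (Suc j))))"

text \<open>p is a possible output of AMA started at y0: the returned point if it stops,
  otherwise an accumulation point of the (infinite) iterate sequence.\<close>
definition ama_output :: "('y::topological_space \<Rightarrow> 'v::topological_space \<Rightarrow> real) \<Rightarrow> 'y set \<Rightarrow> 'v set \<Rightarrow> 'y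
     \<Rightarrow> 'y \<times> 'v \<Rightarrow> bool" where
  "ama_output P Y V y0 p \<longleftrightarrow>
     (\<exists>ys vs J. 0 < J \<and> ama_steps P Y V y0 ys vs J \<and> partially_optimal P Y V (ys J) (vs J)
        \<and> (\<forall>j. 0 < j \<and> j < J \<longrightarrow> \<not> partially_optimal P Y V (ys j) (vs j))
        \<and> p = (ys J, vs J))
   \<or> (\<exists>ys vs. (\<forall>n. ama_steps P Y V y0 ys vs n)
        \<and> (\<forall>j>0. \<not> partially_optimal P Y V (ys j) (vs j))
        \<and> (\<exists>r. strict_mono r \<and> ((\<lambda>j. (ys (r j), vs (r j))) \<longlongrightarrow> p) sequentially))"

end

theory Submission
  imports Defs
begin

text \<open>Every point produced by the alternating minimization AMA has a value of \<open>\<Psi>\<^sup>k\<close> no larger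
  than at its starting point \<open>(y\<^sup>k, v\<^sup>k)\<close>: the iterates decrease \<open>\<Psi>\<^sup>k\<close> monotonically, and an
  accumulation point inherits the bound since \<open>\<Psi>\<^sup>k\<close> is continuous and \<open>\<Upsilon>\<^sub>\<tau> \<times> V\<close> is closed.
  On the other hand \<open>\<Psi>\<^sup>k\<close> agrees with \<open>\<psi>(\<cdot>;\<rho>\<^sup>k)\<close> at \<open>(y\<^sup>k, v\<^sup>k)\<close> and majorizes
  \<open>\<psi>(\<cdot>;\<rho>\<^sup>k) + \<rho>\<^sup>k\<beta>\<^sup>k\<parallel>\<cdot> - (y\<^sup>k, v\<^sup>k)\<parallel>\<^sup>2\<close> everywhere on the box, because the linearization of the
  convex function \<open>g\<close> at \<open>y\<^sup>k\<close> lies below \<open>g\<close>.\<close>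

lemma convex_on_above_tangent:
  fixes g :: "'v::real_normed_vector \<Rightarrow> real"
  assumes "convex_on S g" "x \<in> S" "y \<in> S"
    and deriv: "(g has_derivative D) (at x within S)"
  shows "g x + D (y - x) \<le> g y"
proof -
  define \<gamma> where "\<gamma> = (\<lambda>s::real. x + s *\<^sub>R (y - x))"
  have \<gamma>_convex_comb: "\<gamma> s = (1 - s) *\<^sub>R x + s *\<^sub>R y" for s
    by (simp add: \<gamma>_def algebra_simps)
  have "\<gamma> ` {0..1} \<subseteq> S"
    using convex_on_imp_convex[OF assms(1)] assms(2,3) by (auto simp: \<gamma>_convex_comb intro: convexD_alt)
  moreover have "(\<gamma> has_derivative (\<lambda>s. s *\<^sub>R (y - x))) (at 0 within {0..1})"
    unfolding \<gamma>_def by (auto intro!: derivative_eq_intros)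
  ultimately have "((g \<circ> \<gamma>) has_derivative (D \<circ> (\<lambda>s. s *\<^sub>R (y - x)))) (at 0 within {0..1})"
    using deriv by (intro diff_chain_within) (auto simp: \<gamma>_def intro: has_derivative_subset)
  moreover have "D \<circ> (\<lambda>s. s *\<^sub>R (y - x)) = (\<lambda>s. D (y - x) * s)"
    using has_derivative_linear[OF deriv] by (auto simp: o_def linear_cmul)
  ultimately have "((g \<circ> \<gamma>) has_real_derivative D (y - x)) (at 0 within {0..1})"
    by (simp add: has_field_derivative_def)
  then have "((\<lambda>s. ((g \<circ> \<gamma>) s - (g \<circ> \<gamma>) 0) / (s - 0)) \<longlongrightarrow> D (y - x)) (at 0 within {0..1})"
    by (simp add: has_field_derivative_iff)
  moreover have "\<forall>\<^sub>F s in at 0 within {0..1}. ((g \<circ> \<gamma>) s - (g \<circ> \<gamma>) 0) / (s - 0) \<le> g y - g x"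
    unfolding eventually_at_filter
  proof (intro always_eventually allI impI)
    fix s :: real assume s: "s \<noteq> 0" "s \<in> {0..1}"
    have "g (\<gamma> s) \<le> (1 - s) * g x + s * g y"
      unfolding \<gamma>_convex_comb using s assms(1-3) by (intro convex_onD) auto
    then have "(g \<circ> \<gamma>) s - (g \<circ> \<gamma>) 0 \<le> (g y - g x) * s"
      by (simp add: \<gamma>_def algebra_simps)
    then show "((g \<circ> \<gamma>) s - (g \<circ> \<gamma>) 0) / (s - 0) \<le> g y - g x"
      using s by (simp add: divide_le_eq)
  qed
  moreover have "at (0::real) within {0..1} \<noteq> bot"
    by (simp add: at_within_Icc_at_right)
  ultimately have "D (y - x) \<le> g y - g x"
    by (rule tendsto_upperbound)
  then show ?thesis by simp
qed

lemma continuous_on_integral_upper_param: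
  fixes T :: "real \<Rightarrow> real \<Rightarrow> real"
  assumes cont: "continuous_on {q. 0 \<le> fst q} (\<lambda>q. T (fst q) (snd q))"
  shows "continuous_on {p. 0 \<le> fst p \<and> 0 \<le> snd p} (\<lambda>p. integral {0..snd p} (T (fst p)))"
proof -
  let ?Q = "{p::real \<times> real. 0 \<le> fst p \<and> 0 \<le> snd p}"
  \<comment> \<open>Rescaling to the fixed interval \<open>[0,1]\<close> turns the variable upper limit into a parameter.\<close>
  have rescale: "integral {0..snd p} (T (fst p)) = snd p * integral {0..1} (\<lambda>s. T (fst p) (snd p * s))"
    if "p \<in> ?Q" for p
  proof (cases "snd p = 0")
    case False
    define m where "m = snd p"
    have m: "0 < m" using that False by (auto simp: m_def)
    have "(\<lambda>x. x / m) ` {0..m} = {0..1}"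
      using m by (auto simp: image_iff field_simps intro!: bexI[where x = "_ * m"])
    moreover have "integral ((\<lambda>x. x / m) ` {0..m}) (\<lambda>x. T (fst p) (m * x))
        = (1 / \<bar>m\<bar>) *\<^sub>R integral {0..m} (T (fst p))"
      using m by (intro integral_stretch_real) auto
    ultimately show ?thesis using m by (simp add: m_def)
  qed simp
  have "continuous_on (?Q \<times> cbox 0 1) ((\<lambda>q. T (fst q) (snd q)) \<circ> (\<lambda>(p, s). (fst p, snd p * s)))"
    by (intro continuous_on_compose continuous_on_subset[OF cont])
       (auto intro!: continuous_intros simp: split_beta)
  then have "continuous_on ?Q (\<lambda>p. snd p * integral (cbox 0 1) (\<lambda>s. T (fst p) (snd p * s)))"
    by (intro continuous_intros integral_continuous_on_param) (simp add: split_beta o_def)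
  then show ?thesis
    by (rule continuous_on_cong[THEN iffD1, rotated 2]) (auto simp: rescale)
qed

lemma compact_flowset:
  fixes Delta :: "'a::finite \<Rightarrow> 'r::finite \<Rightarrow> real" and Lambda :: "'w::finite \<Rightarrow> 'r \<Rightarrow> real"
  assumes Lambda_nonneg: "\<forall>w r. 0 \<le> Lambda w r" and route_in_od: "\<forall>r. \<exists>w. Lambda w r = 1"
  shows "compact (flowset Delta Lambda d)"
proof -
  define H where "H = {h::real^'r. (\<forall>r. 0 \<le> h$r) \<and> (\<forall>w. (\<Sum>r\<in>UNIV. Lambda w r * h$r) = d w)}"
  define L where "L = (\<lambda>h::real^'r. (\<chi> a. \<Sum>r\<in>UNIV. Delta a r * h$r) :: real^'a)"
  \<comment> \<open>A route flow never exceeds the demand of its OD pair.\<close>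
  have "H \<subseteq> cbox 0 (\<chi> r. \<Sum>w\<in>UNIV. \<bar>d w\<bar>)"
  proof (intro subsetI, unfold mem_box_cart, intro allI conjI)
    fix h r assume h: "h \<in> H"
    obtain w where w: "Lambda w r = 1" using route_in_od by blast
    have "h$r = Lambda w r * h$r" using w by simp
    also have "\<dots> \<le> (\<Sum>r\<in>UNIV. Lambda w r * h$r)"
      using h Lambda_nonneg by (intro member_le_sum) (auto simp: H_def)
    also have "\<dots> = d w" using h by (auto simp: H_def)
    also have "\<dots> \<le> (\<Sum>w\<in>UNIV. \<bar>d w\<bar>)"
      using member_le_sum[of w UNIV "\<lambda>w. \<bar>d w\<bar>"] by simp
    finally show "h $ r \<le> (\<chi> r. \<Sum>w\<in>UNIV. \<bar>d w\<bar>) $ r" by simp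
    show "0 $ r \<le> h $ r" using h by (simp add: H_def)
  qed
  moreover have "closed H"
  proof -
    have "H = (\<Inter>r. {h. 0 \<le> h$r}) \<inter> (\<Inter>w. {h. (\<Sum>r\<in>UNIV. Lambda w r * h$r) = d w})"
      by (auto simp: H_def)
    then show ?thesis
      by (simp add: closed_Int closed_INT closed_Collect_le closed_Collect_eq continuous_intros)
  qed
  ultimately have "compact H"
    by (meson bounded_cbox bounded_subset compact_eq_bounded_closed)
  then have "compact (L ` H)"
    by (rule compact_continuous_image[rotated]) (auto simp: L_def intro!: continuous_intros)
  moreover have "flowset Delta Lambda d = L ` H"
  proof
    show "flowset Delta Lambda d \<subseteq> L ` H"
    proof
      fix v assume "v \<in> flowset Delta Lambda d"
      then obtain h where "\<forall>r. 0 \<le> h r" "\<forall>w. (\<Sum>r\<in>UNIV. Lambda w r * h r) = d w"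
        "v = (\<chi> a. \<Sum>r\<in>UNIV. Delta a r * h r)"
        unfolding flowset_def by blast
      then have "vec_lambda h \<in> H" "v = L (vec_lambda h)" by (simp_all add: H_def L_def)
      then show "v \<in> L ` H" by blast
    qed
    show "L ` H \<subseteq> flowset Delta Lambda d"
      unfolding flowset_def L_def H_def by blast
  qed
  ultimately show ?thesis by simp
qed

lemma flowset_nonneg:
  assumes "\<forall>a r. 0 \<le> Delta a r" and "v \<in> flowset Delta Lambda d"
  shows "0 \<le> v $ a"
  using assms by (auto simp: flowset_def intro!: sum_nonneg)

lemma closed_boxset: "closed (boxset u)"
proof -
  have "boxset u = (\<Inter>a. {y. 0 \<le> y$a} \<inter> {y. y$a \<le> u$a})"
    by (auto simp: boxset_def)
  then show ?thesis
    by (simp add: closed_Int closed_INT closed_Collect_le continuous_intros)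
qed

lemma convex_boxset: "convex (boxset u)"
  unfolding boxset_def
proof (rule convex_box_cart)
  fix a
  have "{x::real. 0 \<le> x \<and> x \<le> u$a} = {0..u$a}" by auto
  then show "convex {x. 0 \<le> x \<and> x \<le> u$a}" by simp
qed

\<comment> \<open>Strictly positive coordinates of a limit are eventually strictly positive along the sequence,
  so the support can only shrink in the limit.\<close>
lemma closed_sparse_box: "closed (sparse_box u \<tau>)"
  unfolding closed_sequential_limits
proof (intro allI impI, elim conjE)
  fix x :: "nat \<Rightarrow> real^'a" and l
  assume xs: "\<forall>n. x n \<in> sparse_box u \<tau>" and lim: "x \<longlonglongrightarrow> l"
  have "l \<in> boxset u"
    using closed_boxset[of u] xs lim unfolding closed_sequential_limits sparse_box_def by blast
  have "\<forall>a\<in>{a. 0 < l$a}. \<forall>\<^sub>F n in sequentially. 0 < x n $ a"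
    using order_tendstoD(1)[OF tendsto_vec_nth[OF lim]] by auto
  then have "\<forall>\<^sub>F n in sequentially. \<forall>a\<in>{a. 0 < l$a}. 0 < x n $ a"
    by (subst eventually_ball_finite_distrib) auto
  then obtain n where n: "\<forall>a\<in>{a. 0 < l$a}. 0 < x n $ a"
    using eventually_sequentially by auto
  have "card {a. 0 < l$a} \<le> card {a. 0 < x n $ a}"
    using n by (intro card_mono) auto
  also have "\<dots> \<le> \<tau>" using xs by (auto simp: sparse_box_def)
  finally show "l \<in> sparse_box u \<tau>" using \<open>l \<in> boxset u\<close> by (simp add: sparse_box_def)
qed

lemma ama_steps_le_start:
  assumes steps: "ama_steps P Y V y0 ys vs n" and "y0 \<in> Y" "v0 \<in> V" "Suc j \<le> n"
  shows "ys (Suc j) \<in> Y \<and> vs (Suc j) \<in> V \<and> P (ys (Suc j)) (vs (Suc j)) \<le> P y0 v0"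
proof -
  have step: "vs (Suc i) \<in> V \<and> P (ys i) (vs (Suc i)) \<le> P (ys i) v \<and> ys (Suc i) \<in> Y
      \<and> P (ys (Suc i)) (vs (Suc i)) \<le> P y (vs (Suc i))" if "i < n" "v \<in> V" "y \<in> Y" for i v y
    using steps that unfolding ama_steps_def by blast
  show ?thesis
    using \<open>Suc j \<le> n\<close>
  proof (induction j)
    case 0
    have "ys 0 = y0" using steps by (simp add: ama_steps_def)
    then show ?case
      using step[of 0 v0 y0] 0 \<open>y0 \<in> Y\<close> \<open>v0 \<in> V\<close> by force
  next
    case (Suc j)
    then show ?case
      using step[of "Suc j" "vs (Suc j)" "ys (Suc j)"] by force
  qed
qed

lemma ama_output_le_start:
  fixes P :: "'y::topological_space \<Rightarrow> 'v::topological_space \<Rightarrow> real"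
  assumes out: "ama_output P Y V y0 p" and "y0 \<in> Y" "v0 \<in> V"
    and "closed Y" "closed V" and cont: "continuous_on (Y \<times> V) (\<lambda>z. P (fst z) (snd z))"
  shows "fst p \<in> Y \<and> snd p \<in> V \<and> P (fst p) (snd p) \<le> P y0 v0"
  using out unfolding ama_output_def
proof (elim disjE exE conjE)
  fix ys vs J assume "0 < J" "ama_steps P Y V y0 ys vs J" "p = (ys J, vs J)"
  then show ?thesis
    using ama_steps_le_start[of P Y V y0 ys vs J v0 "J - 1"] assms(2,3) by auto
next
  fix ys vs r
  assume steps: "\<forall>n. ama_steps P Y V y0 ys vs n" and "strict_mono r"
    and lim: "(\<lambda>j. (ys (r j), vs (r j))) \<longlonglongrightarrow> p"
  have below: "(ys (r j), vs (r j)) \<in> Y \<times> V \<and> P (ys (r j)) (vs (r j)) \<le> P y0 v0" if "1 \<le> j" for j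
  proof -
    obtain i where "r j = Suc i"
      using \<open>1 \<le> j\<close> strict_mono_imp_increasing[OF \<open>strict_mono r\<close>, of j] by (cases "r j") auto
    then show ?thesis using ama_steps_le_start[OF spec[OF steps, of "r j"] assms(2,3), of i] by auto
  qed
  then have ev: "\<forall>\<^sub>F j in sequentially. (ys (r j), vs (r j)) \<in> Y \<times> V"
    using eventually_sequentially by blast
  have "p \<in> Y \<times> V"
    using Lim_in_closed_set[OF closed_Times[OF \<open>closed Y\<close> \<open>closed V\<close>] ev _ lim] by simp
  moreover have "(\<lambda>j. P (ys (r j)) (vs (r j))) \<longlonglongrightarrow> P (fst p) (snd p)"
    using continuous_on_tendsto_compose[OF cont lim \<open>p \<in> Y \<times> V\<close> ev] by simp
  then have "P (fst p) (snd p) \<le> P y0 v0"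
    by (rule tendsto_upperbound) (use below eventually_sequentially in auto)
  ultimately show ?thesis by auto
qed

lemma continuous_on_Psik:
  fixes t :: "'a::finite \<Rightarrow> real \<Rightarrow> real \<Rightarrow> real"
  assumes tc: "\<And>a. continuous_on {q. 0 \<le> fst q} (\<lambda>q. t a (fst q) (snd q))"
    and Gc: "\<And>a. continuous_on {0..} (G a)"
  shows "continuous_on {z. \<forall>a. 0 \<le> fst z $ a \<and> 0 \<le> snd z $ a}
           (\<lambda>z. Psik t G \<eta> V gradg \<rho> \<beta> yk vk (fst z) (snd z))"
proof -
  let ?D = "{z::(real^'a) \<times> (real^'a). \<forall>a. 0 \<le> fst z $ a \<and> 0 \<le> snd z $ a}"
  have "continuous_on ?D (\<lambda>z. t a (fst z $ a) (snd z $ a))" for a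
    by (rule continuous_on_compose2[OF tc[of a], of _ "\<lambda>z. (fst z $ a, snd z $ a)", simplified])
       (auto intro!: continuous_intros)
  moreover have "continuous_on ?D (\<lambda>z. G a (fst z $ a))" for a
    by (rule continuous_on_compose2[OF Gc[of a]]) (auto intro!: continuous_intros)
  moreover have "continuous_on ?D (\<lambda>z. integral {0..snd z $ a} (t a (fst z $ a)))" for a
    by (rule continuous_on_compose2[OF continuous_on_integral_upper_param[OF tc[of a]],
          of _ "\<lambda>z. (fst z $ a, snd z $ a)", simplified])
       (auto intro!: continuous_intros)
  ultimately show ?thesis
    unfolding Psik_def Fobj_def Phi_def fpot_def by (intro continuous_intros)
qed

lemma Psik_at_center: "Psik t G \<eta> V gradg \<rho> \<beta> yk vk yk vk = psi t G \<eta> V yk vk \<rho>"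
  by (simp add: Psik_def psi_def Phi_def phi_def)

lemma psi_prox_le_Psik:
  assumes "convex_on Y (gval t V)" "(gval t V has_derivative (\<lambda>h. gradg yk \<bullet> h)) (at yk within Y)"
    and "yk \<in> Y" "y \<in> Y" "0 \<le> \<rho>"
  shows "psi t G \<eta> V y v \<rho> + \<rho> * \<beta> * (norm (y - yk, v - vk))\<^sup>2 \<le> Psik t G \<eta> V gradg \<rho> \<beta> yk vk y v"
proof -
  have "gval t V yk + gradg yk \<bullet> (y - yk) \<le> gval t V y"
    using convex_on_above_tangent[OF assms(1,3,4,2)] by simp
  then have "\<rho> * (gval t V yk + gradg yk \<bullet> (y - yk)) \<le> \<rho> * gval t V y"
    using \<open>0 \<le> \<rho>\<close> by (rule mult_left_mono)
  then show ?thesis by (simp add: Psik_def psi_def Phi_def phi_def algebra_simps)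
qed

lemma psi_descent_of_ama_output:
  fixes t :: "'a::finite \<Rightarrow> real \<Rightarrow> real \<Rightarrow> real"
  assumes tc: "\<And>a. continuous_on {q. 0 \<le> fst q} (\<lambda>q. t a (fst q) (snd q))"
    and Gc: "\<And>a. continuous_on {0..} (G a)"
    and "closed V" and V_nonneg: "\<And>z a. z \<in> V \<Longrightarrow> 0 \<le> z $ a"
    and g_convex: "convex_on (boxset u) (gval t V)"
    and g_grad: "(gval t V has_derivative (\<lambda>h. gradg yk \<bullet> h)) (at yk within boxset u)"
    and yk: "yk \<in> sparse_box u \<tau>" and vk: "vk \<in> V" and "0 \<le> \<rho>"
    and out: "ama_output (Psik t G \<eta> V gradg \<rho> \<beta> yk vk) (sparse_box u \<tau>) V yk (y', v')"
  shows "y' \<in> sparse_box u \<tau> \<and> v' \<in> V \<and>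
    psi t G \<eta> V y' v' \<rho> \<le> psi t G \<eta> V yk vk \<rho> - \<rho> * \<beta> * (norm (y' - yk, v' - vk))\<^sup>2"
proof -
  have "sparse_box u \<tau> \<times> V \<subseteq> {z. \<forall>a. 0 \<le> fst z $ a \<and> 0 \<le> snd z $ a}"
    using V_nonneg by (auto simp: sparse_box_def boxset_def)
  then have "continuous_on (sparse_box u \<tau> \<times> V) (\<lambda>z. Psik t G \<eta> V gradg \<rho> \<beta> yk vk (fst z) (snd z))"
    using continuous_on_Psik[OF tc Gc] by (rule continuous_on_subset[rotated])
  then have feasible: "y' \<in> sparse_box u \<tau>" "v' \<in> V"
    and decrease: "Psik t G \<eta> V gradg \<rho> \<beta> yk vk y' v' \<le> psi t G \<eta> V yk vk \<rho>"
    using ama_output_le_start[OF out yk vk closed_sparse_box \<open>closed V\<close>]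
    by (simp_all add: Psik_at_center)
  have "sparse_box u \<tau> \<subseteq> boxset u" by (auto simp: sparse_box_def)
  then have "psi t G \<eta> V y' v' \<rho> + \<rho> * \<beta> * (norm (y' - yk, v' - vk))\<^sup>2
      \<le> Psik t G \<eta> V gradg \<rho> \<beta> yk vk y' v'"
    using psi_prox_le_Psik[where gradg = gradg and yk = yk, OF g_convex g_grad] feasible(1) yk \<open>0 \<le> \<rho>\<close>
    by blast
  then show ?thesis using feasible decrease by simp
qed

theorem proposition4p3:
  fixes Delta :: "'a::finite \<Rightarrow> 'r::finite \<Rightarrow> real"
    and Lambda :: "'w::finite \<Rightarrow> 'r \<Rightarrow> real"
    and d :: "'w \<Rightarrow> real"
    and u :: "real^'a" and \<tau> :: nat
    and t :: "'a \<Rightarrow> real \<Rightarrow> real \<Rightarrow> real"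
    and G :: "'a \<Rightarrow> real \<Rightarrow> real"
    and \<eta> :: real
    and gradg :: "real^'a \<Rightarrow> real^'a"
    and \<epsilon>1 \<epsilon>2 \<epsilon>3 \<theta>l \<theta>u \<rho>0 \<sigma> :: real
    and y v :: "nat \<Rightarrow> real^'a"
    and \<rho> \<beta> :: "nat \<Rightarrow> real"
  assumes Delta01: "\<forall>a r. Delta a r = 0 \<or> Delta a r = 1"
    and Lambda01: "\<forall>w r. Lambda w r = 0 \<or> Lambda w r = 1"
    and route_one_od: "\<forall>r. \<exists>!w. Lambda w r = 1"
    and od_has_route: "\<forall>w. \<exists>r. Lambda w r = 1"
    and d_pos: "\<forall>w. 0 < d w"
    and u_nonneg: "\<forall>a. 0 \<le> u$a"
    and tau: "1 \<le> \<tau>" "\<tau> \<le> CARD('a)"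
    and t_C1: "\<forall>a. \<exists>ty tv. continuous_on {p::real\<times>real. 0 \<le> fst p} ty
                  \<and> continuous_on {p::real\<times>real. 0 \<le> fst p} tv
                  \<and> (\<forall>p\<in>{p::real\<times>real. 0 \<le> fst p}.
                       ((\<lambda>q. t a (fst q) (snd q)) has_derivative (\<lambda>h. ty p * fst h + tv p * snd h))
                         (at p within {p::real\<times>real. 0 \<le> fst p}))"
    and t_incr: "\<forall>a ya. 0 \<le> ya \<longrightarrow> strict_mono (t a ya)"
    and G_nonneg: "\<forall>a x. 0 \<le> x \<longrightarrow> 0 \<le> G a x"
    and G_C1: "\<forall>a. \<exists>G'. continuous_on {0..} G' \<and>
                  (\<forall>x\<in>{0..}. (G a has_real_derivative G' x) (at x within {0..}))"
    and G_incr: "\<forall>a. strict_mono_on {0..} (G a)"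
    and G_convex: "\<forall>a. convex_on {0..} (G a)"
    and int_convex: "\<forall>a. convex_on {p::real\<times>real. 0 \<le> fst p \<and> 0 \<le> snd p}
                        (\<lambda>p. integral {0..snd p} (t a (fst p)))"
    and tv_convex: "\<forall>a. convex_on {p::real\<times>real. 0 \<le> fst p \<and> 0 \<le> snd p}
                        (\<lambda>p. t a (fst p) (snd p) * snd p)"
    and eta_pos: "0 < \<eta>"
    and g_convex: "convex_on (boxset u) (gval t (flowset Delta Lambda d))"
    and g_grad: "\<forall>z\<in>boxset u. (gval t (flowset Delta Lambda d) has_derivative (\<lambda>h. gradg z \<bullet> h))
                               (at z within boxset u)"
    and g_grad_cont: "continuous_on (boxset u) gradg"
    and eps: "0 < \<epsilon>1" "0 < \<epsilon>2" "0 < \<epsilon>3"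
    and theta: "0 < \<theta>l" "\<theta>l < \<theta>u"
    and rho0: "0 < \<rho>0" "\<rho> 0 = \<rho>0"
    and sigma: "1 < \<sigma>"
    and y0: "y 0 \<in> sparse_box u \<tau>"
    and v0: "v 0 \<in> VI_sol t (flowset Delta Lambda d) (y 0)"
    and iter: "\<forall>k. (\<forall>k'<k. \<not> (norm (y (Suc k') - y k') \<le> \<epsilon>1 \<and> norm (v (Suc k') - v k') \<le> \<epsilon>2
                         \<and> Phi t (flowset Delta Lambda d) gradg (y (Suc k')) (v (Suc k')) (y k') (v k') \<le> \<epsilon>3))
             \<longrightarrow> \<theta>l / \<rho> k \<le> \<beta> k \<and> \<beta> k \<le> \<theta>u / \<rho> k
               \<and> ama_output (Psik t G \<eta> (flowset Delta Lambda d) gradg (\<rho> k) (\<beta> k) (y k) (v k))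
                    (sparse_box u \<tau>) (flowset Delta Lambda d) (y k) (y (Suc k), v (Suc k))
               \<and> \<rho> (Suc k) = (if Phi t (flowset Delta Lambda d) gradg (y (Suc k)) (v (Suc k)) (y k) (v k) > \<epsilon>3
                               then \<sigma> * \<rho> k else \<rho> k)"
  shows "\<forall>k. (\<forall>k'<k. \<not> (norm (y (Suc k') - y k') \<le> \<epsilon>1 \<and> norm (v (Suc k') - v k') \<le> \<epsilon>2
                         \<and> Phi t (flowset Delta Lambda d) gradg (y (Suc k')) (v (Suc k')) (y k') (v k') \<le> \<epsilon>3))
          \<longrightarrow> psi t G \<eta> (flowset Delta Lambda d) (y (Suc k)) (v (Suc k)) (\<rho> k)
              \<le> psi t G \<eta> (flowset Delta Lambda d) (y k) (v k) (\<rho> k)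
                 - \<rho> k * \<beta> k * (norm (y (Suc k) - y k, v (Suc k) - v k))\<^sup>2"
proof -
  define V where "V = flowset Delta Lambda d"
  let ?running = "\<lambda>k. \<forall>k'<k. \<not> (norm (y (Suc k') - y k') \<le> \<epsilon>1 \<and> norm (v (Suc k') - v k') \<le> \<epsilon>2
                         \<and> Phi t V gradg (y (Suc k')) (v (Suc k')) (y k') (v k') \<le> \<epsilon>3)"
  have tc: "continuous_on {q. 0 \<le> fst q} (\<lambda>q. t a (fst q) (snd q))" for a
  proof -
    obtain ty tv where "\<forall>p\<in>{p. 0 \<le> fst p}. ((\<lambda>q. t a (fst q) (snd q))
        has_derivative (\<lambda>h. ty p * fst h + tv p * snd h)) (at p within {p. 0 \<le> fst p})"
      using t_C1 by blast
    then show ?thesis by (intro has_derivative_continuous_on) blast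
  qed
  have Gc: "continuous_on {0..} (G a)" for a
  proof -
    obtain G' where "\<forall>x\<in>{0..}. (G a has_real_derivative G' x) (at x within {0..})"
      using G_C1 by blast
    then show ?thesis by (intro DERIV_continuous_on) blast
  qed
  have "\<forall>w r. 0 \<le> Lambda w r"
    using Lambda01 by (metis order.refl zero_le_one)
  moreover have "\<forall>r. \<exists>w. Lambda w r = 1"
    using route_one_od by blast
  ultimately have "closed V"
    unfolding V_def by (intro compact_imp_closed compact_flowset)
  have "\<forall>a r. 0 \<le> Delta a r"
    using Delta01 by (metis order.refl zero_le_one)
  then have V_nonneg: "0 \<le> z $ a" if "z \<in> V" for z a
    using that unfolding V_def by (rule flowset_nonneg)
  have step: "y (Suc k) \<in> sparse_box u \<tau> \<and> v (Suc k) \<in> V \<and>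
      psi t G \<eta> V (y (Suc k)) (v (Suc k)) (\<rho> k)
        \<le> psi t G \<eta> V (y k) (v k) (\<rho> k) - \<rho> k * \<beta> k * (norm (y (Suc k) - y k, v (Suc k) - v k))\<^sup>2"
    if "?running k" "y k \<in> sparse_box u \<tau>" "v k \<in> V" "0 < \<rho> k" for k
  proof -
    have grad: "(gval t V has_derivative (\<bullet>) (gradg (y k))) (at (y k) within boxset u)"
      using g_grad \<open>y k \<in> sparse_box u \<tau>\<close> unfolding V_def sparse_box_def by blast
    have out: "ama_output (Psik t G \<eta> V gradg (\<rho> k) (\<beta> k) (y k) (v k)) (sparse_box u \<tau>) V (y k)
        (y (Suc k), v (Suc k))"
      using iter \<open>?running k\<close> unfolding V_def by blast
    show ?thesis
      by (rule psi_descent_of_ama_output[OF tc Gc \<open>closed V\<close> V_nonneg g_convex[folded V_def]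
            grad that(2,3) less_imp_le[OF that(4)] out])
  qed
  have feasible: "y k \<in> sparse_box u \<tau> \<and> v k \<in> V \<and> 0 < \<rho> k" if "?running k" for k
    using that
  proof (induction k)
    case 0
    then show ?case using y0 v0 rho0 by (simp add: V_def VI_sol_def)
  next
    case (Suc k)
    then have "?running k" by simp
    moreover have "0 < \<rho> (Suc k)"
      using Suc.IH iter sigma \<open>?running k\<close> unfolding V_def by (simp add: V_def)
    ultimately show ?case
      using Suc.IH step[of k] by blast
  qed
  show ?thesis
    using step feasible unfolding V_def by blast
qed

end
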